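(* Let $G$ be a finite simple graph with a normal spanning tree $T$ rooted at $r$ such that $G$ has no secant edges with respect to $T$, and suppose $T$ is a whip. Then $G$ has a proper $3$-coloring in which all leaves of $T$ (vertices of $T$ having no children) receive the same color.
   Context: For a tree $T$ rooted at $r$, write $y\le_T x$ if $y$ lies on the $rx$-path of $T$; the children (successors) of $x$ are its neighbors $z$ with $x\le_T z$. $T$ is normal in $G$ if for every edge $xy$ of $G$, $x\le_T y$ or $y\le_T x$. Two edges $e,e'$ of $G$ are secant with respect to $T$ if there is a path $P=x_1\dots x_n$ in $T$ with $x_1=r$ containing the ends of $e,e'$ such that, with respect to the enumeration $x_1\dots x_n$, both are jumps (an edge $x_ix_j$ with $|i-j|>1$) and, writing them $x_lx_m$, $x_px_q$ with $l<m$, $p<q$, we have $l<p<m<q$ or $p<l<q<m$. A star$^0$-like tree is a tree having exactly one vertex of degree strictly greater than $2$, called its node. A whip is a rooted star$^0$-like tree in which every child of its node is a leaf. *)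

theory Defs
  imports Main
begin

definition simple_graph :: "'a set \<Rightarrow> 'a set set \<Rightarrow> bool" where
  "simple_graph V E \<longleftrightarrow> finite V \<and> (\<forall>e\<in>E. e \<subseteq> V \<and> card e = 2)"

definition is_path :: "'a set set \<Rightarrow> 'a list \<Rightarrow> bool" where
  "is_path Es xs \<longleftrightarrow> xs \<noteq> [] \<and> distinct xs \<and>
     (\<forall>i. Suc i < length xs \<longrightarrow> {xs ! i, xs ! Suc i} \<in> Es)"

definition graph_connected :: "'a set \<Rightarrow> 'a set set \<Rightarrow> bool" where
  "graph_connected V Es \<longleftrightarrow>
     (\<forall>x\<in>V. \<forall>y\<in>V. \<exists>xs. is_path Es xs \<and> set xs \<subseteq> V \<and> hd xs = x \<and> last xs = y)"

definition graph_acyclic :: "'a set set \<Rightarrow> bool" where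
  "graph_acyclic Es \<longleftrightarrow>
     \<not> (\<exists>xs. length xs \<ge> 3 \<and> is_path Es xs \<and> {last xs, hd xs} \<in> Es)"

definition is_tree :: "'a set \<Rightarrow> 'a set set \<Rightarrow> bool" where
  "is_tree V Es \<longleftrightarrow> V \<noteq> {} \<and> simple_graph V Es \<and> graph_connected V Es \<and> graph_acyclic Es"

definition spanning_tree :: "'a set \<Rightarrow> 'a set set \<Rightarrow> 'a set set \<Rightarrow> bool" where
  "spanning_tree V E TE \<longleftrightarrow> TE \<subseteq> E \<and> is_tree V TE"

definition tree_le :: "'a set set \<Rightarrow> 'a \<Rightarrow> 'a \<Rightarrow> 'a \<Rightarrow> bool" where
  "tree_le TE r y x \<longleftrightarrow> (\<exists>xs. is_path TE xs \<and> hd xs = r \<and> last xs = x \<and> y \<in> set xs)"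

definition tree_children :: "'a set set \<Rightarrow> 'a \<Rightarrow> 'a \<Rightarrow> 'a set" where
  "tree_children TE r x = {z. {x, z} \<in> TE \<and> tree_le TE r x z}"

definition tree_leaf :: "'a set \<Rightarrow> 'a set set \<Rightarrow> 'a \<Rightarrow> 'a \<Rightarrow> bool" where
  "tree_leaf V TE r x \<longleftrightarrow> x \<in> V \<and> tree_children TE r x = {}"

definition normal_tree :: "'a set set \<Rightarrow> 'a set set \<Rightarrow> 'a \<Rightarrow> bool" where
  "normal_tree E TE r \<longleftrightarrow> (\<forall>x y. {x, y} \<in> E \<longrightarrow> tree_le TE r x y \<or> tree_le TE r y x)"

definition secant :: "'a set set \<Rightarrow> 'a \<Rightarrow> 'a set \<Rightarrow> 'a set \<Rightarrow> bool" where
  "secant TE r e e' \<longleftrightarrow>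
     (\<exists>xs l m p q. is_path TE xs \<and> hd xs = r \<and>
        l < m \<and> p < q \<and> m < length xs \<and> q < length xs \<and>
        e = {xs ! l, xs ! m} \<and> e' = {xs ! p, xs ! q} \<and>
        m - l > 1 \<and> q - p > 1 \<and>
        ((l < p \<and> p < m \<and> m < q) \<or> (p < l \<and> l < q \<and> q < m)))"

definition no_secant_edges :: "'a set set \<Rightarrow> 'a set set \<Rightarrow> 'a \<Rightarrow> bool" where
  "no_secant_edges E TE r \<longleftrightarrow> (\<forall>e\<in>E. \<forall>e'\<in>E. \<not> secant TE r e e')"

definition tree_degree :: "'a set set \<Rightarrow> 'a \<Rightarrow> nat" where
  "tree_degree TE x = card {y. {x, y} \<in> TE}"

definition star0_like :: "'a set \<Rightarrow> 'a set set \<Rightarrow> bool" where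
  "star0_like V TE \<longleftrightarrow> (\<exists>!v. v \<in> V \<and> tree_degree TE v > 2)"

definition whip :: "'a set \<Rightarrow> 'a set set \<Rightarrow> 'a \<Rightarrow> bool" where
  "whip V TE r \<longleftrightarrow> r \<in> V \<and> is_tree V TE \<and>
star0_like V TE \<and>
     (\<forall>v. v \<in> V \<and> tree_degree TE v > 2 \<longrightarrow>
          (\<forall>z\<in>tree_children TE r v. tree_children TE r z = {}))"

definition proper_3_coloring :: "'a set \<Rightarrow> 'a set set \<Rightarrow> ('a \<Rightarrow> nat) \<Rightarrow> bool" where
  "proper_3_coloring V E c \<longleftrightarrow> c ` V \<subseteq> {0, 1, 2} \<and> (\<forall>x y. {x, y} \<in> E \<longrightarrow> c x \<noteq> c y)"

end

(* Every vertex of a whip lies on the spine (the root path of the node), is a leaf below the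
   node, or lies on the tail, the path continuing beyond the root away from the node. Lay the
   vertices out on a line: the spine by depth, then all leaves below the node at one position,
   then the tail in reverse, its end at that same position. Normality makes every edge join
   comparable vertices, so adjacent vertices get distinct positions and the tail meets the rest
   only at the root; the absence of secant edges says that no two edges cross in this layout.
   A graph drawn on a line without crossing edges is 3-colourable, and the leaves inherit the
   colour of their common position. *)

theory Submission
  imports Defs
begin

section \<open>Colouring non-crossing layouts\<close>

lemma noncrossing_split_point:
  fixes adj :: "nat \<Rightarrow> nat \<Rightarrow> bool"
  assumes noncrossing: "\<And>a b c d. adj a b \<Longrightarrow> adj c d \<Longrightarrow> a < c \<Longrightarrow> c < b \<Longrightarrow> b < d \<Longrightarrow> False"
    and "Suc i < j"
  obtains k where "i < k" "k < j"
    "\<And>x y. i \<le> x \<Longrightarrow> x < k \<Longrightarrow> k < y \<Longrightarrow> y \<le> j \<Longrightarrow> adj x y \<Longrightarrow> x = i \<and> y = j"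
proof -
  define S where "S = {b. i < b \<and> b < j \<and> adj i b}"
  define k where "k = (if S = {} then Suc i else Max S)"
  have fin: "finite S" unfolding S_def by auto
  have k: "i < k" "k < j" using assms(2) Max_in[OF fin] unfolding k_def by (auto simp: S_def)
  have "x = i \<and> y = j" if "i \<le> x" "x < k" "k < y" "y \<le> j" "adj x y" for x y
  proof
    show "x = i"
    proof (rule ccontr)
      assume "x \<noteq> i"
      then have "S \<noteq> {}" using that unfolding k_def by (auto split: if_splits)
      then have "adj i k" using Max_in[OF fin] unfolding k_def by (auto simp: S_def)
      then show False using noncrossing[of i k x y] that \<open>x \<noteq> i\<close> by auto
    qed
    show "y = j"
    proof (rule ccontr)
      assume "y \<noteq> j"
      then have "y \<in> S" using that \<open>x = i\<close> k by (auto simp: S_def)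
      then have "S \<noteq> {}" "y \<le> Max S" using Max_ge[OF fin] by auto
      then show False using \<open>k < y\<close> unfolding k_def by simp
    qed
  qed
  then show ?thesis using that k by blast
qed

lemma glue_interval_colourings:
  fixes adj :: "nat \<Rightarrow> nat \<Rightarrow> bool"
  assumes sym: "\<And>x y. adj x y \<Longrightarrow> adj y x"
    and c1: "\<forall>x\<in>{i..k}. \<forall>y\<in>{i..k}. adj x y \<longrightarrow> c1 x \<noteq> c1 y"
    and c2: "\<forall>x\<in>{k..j}. \<forall>y\<in>{k..j}. adj x y \<longrightarrow> c2 x \<noteq> c2 y"
    and agree: "c1 k = c2 k" and ends: "c1 i \<noteq> c2 j" and "i < k" "k < j"
    and cross: "\<And>x y. i \<le> x \<Longrightarrow> x < k \<Longrightarrow> k < y \<Longrightarrow> y \<le> j \<Longrightarrow> adj x y \<Longrightarrow> x = i \<and> y = j"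
  defines "col x \<equiv> if x \<le> k then c1 x else c2 x"
  shows "\<forall>x\<in>{i..j}. \<forall>y\<in>{i..j}. adj x y \<longrightarrow> col x \<noteq> col y"
proof (intro ballI impI)
  fix x y assume xy: "x \<in> {i..j}" "y \<in> {i..j}" "adj x y"
  consider "x \<le> k" "y \<le> k" | "k \<le> x" "k \<le> y" | "x < k" "k < y" | "y < k" "k < x"
    by linarith
  then show "col x \<noteq> col y"
  proof cases
    case 1
    then show ?thesis using c1 xy by (auto simp: col_def)
  next
    case 2
    then have "col x = c2 x" "col y = c2 y" using agree by (auto simp: col_def)
    then show ?thesis using c2 xy 2 by auto
  next
    case 3
    then show ?thesis using cross[of x y] xy ends \<open>i < k\<close> \<open>k < j\<close> by (auto simp: col_def)
  next
    case 4
    then show ?thesis using cross[of y x] sym xy ends \<open>i < k\<close> \<open>k < j\<close> by (auto simp: col_def)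
  qed
qed

text \<open>Induction on the length of the interval: cut it at a split point k and colour both halves
  with the same colour at k.\<close>
lemma noncrossing_3_colouring:
  fixes adj :: "nat \<Rightarrow> nat \<Rightarrow> bool"
  assumes irrefl: "\<And>x. \<not> adj x x" and sym: "\<And>x y. adj x y \<Longrightarrow> adj y x"
    and noncrossing: "\<And>a b c d. adj a b \<Longrightarrow> adj c d \<Longrightarrow> a < c \<Longrightarrow> c < b \<Longrightarrow> b < d \<Longrightarrow> False"
  shows "i < j \<Longrightarrow> \<alpha> < 3 \<Longrightarrow> \<beta> < 3 \<Longrightarrow> \<alpha> \<noteq> \<beta> \<Longrightarrow>
    \<exists>col. (\<forall>x. col x < (3::nat)) \<and> col i = \<alpha> \<and> col j = \<beta> \<and>
      (\<forall>x\<in>{i..j}. \<forall>y\<in>{i..j}. adj x y \<longrightarrow> col x \<noteq> col y)"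
proof (induction "j - i" arbitrary: i j \<alpha> \<beta> rule: less_induct)
  case less
  show ?case
  proof (cases "j = Suc i")
    case True
    show ?thesis
      by (rule exI[of _ "\<lambda>x. if x = i then \<alpha> else \<beta>"])
        (use less.prems True irrefl in \<open>auto simp: le_Suc_eq\<close>)
  next
    case False
    obtain k where k: "i < k" "k < j"
      and cross: "\<And>x y. i \<le> x \<Longrightarrow> x < k \<Longrightarrow> k < y \<Longrightarrow> y \<le> j \<Longrightarrow> adj x y \<Longrightarrow> x = i \<and> y = j"
    proof (rule noncrossing_split_point[of adj i j])
      show "Suc i < j" using less.prems(1) False by simp
    qed (use noncrossing that in blast)+
    define \<gamma> where "\<gamma> = 3 - \<alpha> - \<beta>"
    have \<gamma>: "\<gamma> < 3" "\<gamma> \<noteq> \<alpha>" "\<gamma> \<noteq> \<beta>" using less.prems unfolding \<gamma>_def by presburger+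
    have shorter: "k - i < j - i" "j - k < j - i" using k by auto
    obtain c1 where c1: "\<forall>x. c1 x < 3" "c1 i = \<alpha>" "c1 k = \<gamma>"
      "\<forall>x\<in>{i..k}. \<forall>y\<in>{i..k}. adj x y \<longrightarrow> c1 x \<noteq> c1 y"
      using less.hyps[OF shorter(1)] k less.prems \<gamma> by blast
    obtain c2 where c2: "\<forall>x. c2 x < 3" "c2 k = \<gamma>" "c2 j = \<beta>"
      "\<forall>x\<in>{k..j}. \<forall>y\<in>{k..j}. adj x y \<longrightarrow> c2 x \<noteq> c2 y"
      using less.hyps[OF shorter(2)] k less.prems \<gamma> by blast
    define col where "col x = (if x \<le> k then c1 x else c2 x)" for x
    have "\<forall>x\<in>{i..j}. \<forall>y\<in>{i..j}. adj x y \<longrightarrow> col x \<noteq> col y"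
      using glue_interval_colourings[OF sym c1(4) c2(4) _ _ k cross] c1(2,3) c2(2,3) less.prems(4)
      unfolding col_def by simp
    moreover have "\<forall>x. col x < 3" "col i = \<alpha>" "col j = \<beta>" using c1 c2 k by (auto simp: col_def)
    ultimately show ?thesis by blast
  qed
qed

lemma noncrossing_layout_3_colouring:
  fixes f :: "'a \<Rightarrow> nat" and E :: "'a set set"
  assumes neq: "\<And>x y. {x, y} \<in> E \<Longrightarrow> f x \<noteq> f y"
    and noncrossing: "\<And>x1 y1 x2 y2. {x1, y1} \<in> E \<Longrightarrow> {x2, y2} \<in> E \<Longrightarrow>
      f x1 < f x2 \<Longrightarrow> f x2 < f y1 \<Longrightarrow> f y1 < f y2 \<Longrightarrow> False"
    and bounded: "\<And>x y. {x, y} \<in> E \<Longrightarrow> f x \<le> N"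
  obtains col :: "nat \<Rightarrow> nat" where "proper_3_coloring V E (col \<circ> f)"
proof -
  define adj where "adj p q \<longleftrightarrow> (\<exists>x y. {x, y} \<in> E \<and> f x = p \<and> f y = q)" for p q
  have "\<exists>col. (\<forall>n. col n < (3::nat)) \<and> col 0 = 0 \<and> col (Suc N) = 1 \<and>
      (\<forall>p\<in>{0..Suc N}. \<forall>q\<in>{0..Suc N}. adj p q \<longrightarrow> col p \<noteq> col q)"
  proof (rule noncrossing_3_colouring)
    show "\<not> adj p p" for p using neq unfolding adj_def by metis
    show "adj q p" if "adj p q" for p q using that unfolding adj_def by (metis insert_commute)
    show False if "adj a b" "adj c d" "a < c" "c < b" "b < d" for a b c d
      using that noncrossing unfolding adj_def by blast
  qed simp_all
  then obtain col where range: "\<And>n. col n < (3::nat)"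
    and proper: "\<forall>p\<in>{0..Suc N}. \<forall>q\<in>{0..Suc N}. adj p q \<longrightarrow> col p \<noteq> col q" by blast
  have "(col \<circ> f) ` V \<subseteq> {0, 1, 2}"
  proof (rule image_subsetI)
    fix x
    have "col (f x) < 3" by (rule range)
    then show "(col \<circ> f) x \<in> {0, 1, 2}" by auto
  qed
  moreover have "(col \<circ> f) x \<noteq> (col \<circ> f) y" if "{x, y} \<in> E" for x y
  proof -
    have "f x \<in> {0..Suc N}" "f y \<in> {0..Suc N}"
      using bounded[OF that] bounded[of y x] that by (auto simp: insert_commute)
    moreover have "adj (f x) (f y)" using that unfolding adj_def by blast
    ultimately show ?thesis using proper by simp
  qed
  ultimately have "proper_3_coloring V E (col \<circ> f)" unfolding proper_3_coloring_def by blast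
  then show ?thesis by (rule that)
qed

section \<open>Paths\<close>

lemma is_path_iff_successively:
  "is_path E xs \<longleftrightarrow> xs \<noteq> [] \<and> distinct xs \<and> successively (\<lambda>a b. {a, b} \<in> E) xs"
  unfolding is_path_def successively_conv_nth by auto

lemma is_path_take: "is_path E xs \<Longrightarrow> 0 < n \<Longrightarrow> is_path E (take n xs)"
  unfolding is_path_def by auto

lemma is_path_snoc:
  "is_path E xs \<Longrightarrow> z \<notin> set xs \<Longrightarrow> {last xs, z} \<in> E \<Longrightarrow> is_path E (xs @ [z])"
  unfolding is_path_iff_successively by (auto simp: successively_append_iff)

lemma is_path_edge: "is_path E xs \<Longrightarrow> Suc i < length xs \<Longrightarrow> {xs ! i, xs ! Suc i} \<in> E"
  unfolding is_path_def by auto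

lemma simple_graph_edge: "simple_graph V E \<Longrightarrow> {a, b} \<in> E \<Longrightarrow> a \<in> V \<and> b \<in> V \<and> a \<noteq> b"
  unfolding simple_graph_def by (cases "a = b") auto

lemma simple_graph_path_subset:
  assumes "simple_graph V E" "is_path E xs" "hd xs \<in> V"
  shows "set xs \<subseteq> V"
proof
  fix y assume "y \<in> set xs"
  then obtain i where i: "i < length xs" "xs ! i = y" by (auto simp: in_set_conv_nth)
  show "y \<in> V"
  proof (cases i)
    case 0
    then show ?thesis using i assms(3) by (cases xs) auto
  next
    case (Suc j)
    then show ?thesis using is_path_edge[OF assms(2), of j] simple_graph_edge[OF assms(1)] i by auto
  qed
qed

text \<open>The cycle runs out along the first path up to its first vertex t on the second one and
  back along the second.\<close>
lemma diverging_paths_not_acyclic: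
  assumes p1: "is_path E (a # xs)" and p2: "is_path E (a # ys)" and ne: "xs \<noteq> []" "ys \<noteq> []"
    and hd_neq: "hd xs \<noteq> hd ys" and last_eq: "last xs = last ys"
  shows "\<not> graph_acyclic E"
proof -
  let ?P = "\<lambda>a b. {a, b} \<in> E"
  have "\<exists>x\<in>set xs. x \<in> set ys" using ne last_eq by (metis last_in_set)
  then obtain p t s where xs: "xs = p @ t # s" and t: "t \<in> set ys" and p: "\<forall>y\<in>set p. y \<notin> set ys"
    using split_list_first_prop[of xs "\<lambda>x. x \<in> set ys"] by blast
  obtain q s' where ys: "ys = q @ t # s'" using t by (meson split_list)
  define cyc where "cyc = a # p @ t # rev q"
  have s1: "successively ?P (a # p @ t # s)" and d1: "distinct (a # p @ t # s)"
    using p1 xs by (auto simp: is_path_iff_successively)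
  have s2: "successively ?P ([a] @ (q @ [t]) @ s')" and d2: "distinct (a # q @ t # s')"
    using p2 ys by (auto simp: is_path_iff_successively)
  have "successively ?P (a # p @ [t])"
    using s1 successively_append_iff[of ?P "a # p @ [t]" s] by simp
  moreover have "successively ?P (rev (q @ [t]))"
    using s2 unfolding successively_append_iff successively_rev by (simp add: insert_commute)
  ultimately have "successively ?P ((a # p) @ t # rev q)"
    by (auto simp: successively_append_iff successively_Cons hd_append split: if_splits)
  moreover have "distinct cyc" using d1 d2 p xs ys unfolding cyc_def by auto
  ultimately have path: "is_path E cyc" unfolding is_path_iff_successively cyc_def by simp
  have "p \<noteq> [] \<or> q \<noteq> []" using hd_neq xs ys by auto
  then have len: "length cyc \<ge> 3" unfolding cyc_def by (cases p; cases q) auto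
  have "last cyc = hd ys" using ys unfolding cyc_def by (cases q) (auto simp: last_rev)
  moreover have "{a, hd ys} \<in> E" using p2 ne by (cases ys) (auto simp: is_path_iff_successively)
  ultimately have "{last cyc, hd cyc} \<in> E" unfolding cyc_def by (simp add: insert_commute)
  then show ?thesis using path len unfolding graph_acyclic_def by blast
qed

lemma acyclic_path_unique:
  assumes "graph_acyclic E"
  shows "is_path E xs \<Longrightarrow> is_path E ys \<Longrightarrow> hd xs = hd ys \<Longrightarrow> last xs = last ys \<Longrightarrow> xs = ys"
proof (induction xs arbitrary: ys)
  case Nil
  then show ?case by (simp add: is_path_def)
next
  case (Cons a xs)
  obtain ys' where ys: "ys = a # ys'"
    using Cons.prems(2,3) by (cases ys) (auto simp: is_path_def)
  have no_return: "zs = []" if "is_path E (a # zs)" "last (a # zs) = a" for zs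
    using that by (cases zs rule: rev_cases) (auto simp: is_path_def)
  have tails: "is_path E xs" "is_path E ys'" if "xs \<noteq> []" "ys' \<noteq> []"
    using Cons.prems(1,2) ys that by (auto simp: is_path_iff_successively successively_Cons)
  consider "xs = []" | "ys' = []" | "xs \<noteq> []" "ys' \<noteq> []" "hd xs = hd ys'"
    | "xs \<noteq> []" "ys' \<noteq> []" "hd xs \<noteq> hd ys'" by blast
  then show ?case
  proof cases
    case 1
    then have "last (a # ys') = a" using Cons.prems(4) ys by simp
    then show ?thesis using no_return Cons.prems(2) ys 1 by blast
  next
    case 2
    then have "last (a # xs) = a" using Cons.prems(4) ys by simp
    then show ?thesis using no_return Cons.prems(1) ys 2 by blast
  next
    case 3
    then show ?thesis using Cons.IH[of ys'] tails Cons.prems(4) ys by simp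
  next
    case 4
    then show ?thesis
      using diverging_paths_not_acyclic[of E a xs ys'] Cons.prems(1,2,4) ys assms by auto
  qed
qed

section \<open>Rooted trees\<close>

locale rooted_tree =
  fixes V :: "'a set" and TE :: "'a set set" and r :: 'a
  assumes tree: "is_tree V TE" and root_in_V: "r \<in> V"
begin

lemma simple_tree: "simple_graph V TE"
  using tree by (simp add: is_tree_def)

lemma finite_V: "finite V"
  using simple_tree by (simp add: simple_graph_def)

lemma tree_edge: "{a, b} \<in> TE \<Longrightarrow> a \<in> V \<and> b \<in> V \<and> a \<noteq> b"
  using simple_graph_edge[OF simple_tree] .

definition root_path :: "'a \<Rightarrow> 'a list" where
  "root_path x = (THE xs. is_path TE xs \<and> hd xs = r \<and> last xs = x)"

definition depth :: "'a \<Rightarrow> nat" where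
  "depth x = length (root_path x) - 1"

lemma root_path_unique:
  "is_path TE xs \<Longrightarrow> is_path TE ys \<Longrightarrow> hd xs = hd ys \<Longrightarrow> last xs = last ys \<Longrightarrow> xs = ys"
  using acyclic_path_unique tree by (auto simp: is_tree_def)

lemma root_path:
  assumes "x \<in> V"
  shows "is_path TE (root_path x)" "hd (root_path x) = r" "last (root_path x) = x"
proof -
  obtain xs where xs: "is_path TE xs \<and> hd xs = r \<and> last xs = x"
    using tree root_in_V assms unfolding is_tree_def graph_connected_def by blast
  have "\<exists>!xs. is_path TE xs \<and> hd xs = r \<and> last xs = x"
    using xs root_path_unique[of _ xs] by (intro ex1I[of _ xs]) auto
  then have "is_path TE (root_path x) \<and> hd (root_path x) = r \<and> last (root_path x) = x"
    unfolding root_path_def by (rule theI')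
  then show "is_path TE (root_path x)" "hd (root_path x) = r" "last (root_path x) = x" by auto
qed

lemma root_path_eq:
  assumes "is_path TE xs" "hd xs = r"
  shows "root_path (last xs) = xs"
proof -
  have "set xs \<subseteq> V"
    using simple_graph_path_subset[OF simple_tree assms(1)] assms(2) root_in_V by simp
  then have "last xs \<in> V" using assms(1) by (auto simp: is_path_def)
  then show ?thesis using root_path[of "last xs"] root_path_unique assms by simp
qed

lemma root_path_subset: "x \<in> V \<Longrightarrow> set (root_path x) \<subseteq> V"
  using simple_graph_path_subset[OF simple_tree root_path(1)] root_path(2) root_in_V by simp

lemma length_root_path: "x \<in> V \<Longrightarrow> length (root_path x) = Suc (depth x)"
  using root_path(1)[of x] unfolding depth_def is_path_def by (cases "root_path x") auto

lemma root_path_nonempty: "x \<in> V \<Longrightarrow> root_path x \<noteq> []"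
  using length_root_path[of x] by auto

lemma root_path_nth_depth: "x \<in> V \<Longrightarrow> root_path x ! depth x = x"
  using root_path(3)[of x] root_path_nonempty[of x] by (simp add: depth_def last_conv_nth)

lemma root_path_nth_0: "x \<in> V \<Longrightarrow> root_path x ! 0 = r"
  using root_path(2)[of x] root_path_nonempty[of x] by (simp add: hd_conv_nth)

lemma root_in_root_path: "x \<in> V \<Longrightarrow> r \<in> set (root_path x)"
  using root_path_nth_0[of x] length_root_path[of x] nth_mem[of 0 "root_path x"] by simp

lemma self_in_root_path: "x \<in> V \<Longrightarrow> x \<in> set (root_path x)"
  using root_path(3)[of x] root_path_nonempty[of x] last_in_set by metis

lemma depth_root: "depth r = 0"
  using root_path_eq[of "[r]"] by (simp add: is_path_def depth_def)

lemma depth_eq_0_iff: "x \<in> V \<Longrightarrow> depth x = 0 \<longleftrightarrow> x = r"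
  using root_path_nth_depth[of x] root_path_nth_0[of x] depth_root by auto

lemma distinct_root_path: "x \<in> V \<Longrightarrow> distinct (root_path x)"
  using root_path(1)[of x] by (simp add: is_path_def)

lemma root_path_nth_eq_iff:
  "x \<in> V \<Longrightarrow> i \<le> depth x \<Longrightarrow> j \<le> depth x \<Longrightarrow> root_path x ! i = root_path x ! j \<longleftrightarrow> i = j"
  using distinct_root_path length_root_path by (simp add: nth_eq_iff_index_eq)

lemma root_path_edge: "x \<in> V \<Longrightarrow> i < depth x \<Longrightarrow> {root_path x ! i, root_path x ! Suc i} \<in> TE"
  using is_path_edge[OF root_path(1)] length_root_path by simp

lemma root_path_prefix:
  assumes "x \<in> V" "i \<le> depth x"
  shows "root_path (root_path x ! i) = take (Suc i) (root_path x)"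
proof -
  have "is_path TE (take (Suc i) (root_path x))" "hd (take (Suc i) (root_path x)) = r"
    using is_path_take[OF root_path(1)[OF assms(1)], of "Suc i"] root_path(2)[OF assms(1)]
    by (auto simp: hd_take)
  moreover have "last (take (Suc i) (root_path x)) = root_path x ! i"
    using assms length_root_path by (simp add: take_Suc_conv_app_nth)
  ultimately show ?thesis using root_path_eq[of "take (Suc i) (root_path x)"] by simp
qed

lemma depth_root_path_nth:
  assumes "x \<in> V" "i \<le> depth x"
  shows "depth (root_path x ! i) = i"
  unfolding depth_def[of "root_path x ! i"] root_path_prefix[OF assms]
  using length_root_path[OF assms(1)] assms(2) by simp

lemma ancestor_iff:
  assumes "x \<in> V"
  shows "y \<in> set (root_path x) \<longleftrightarrow> depth y \<le> depth x \<and> root_path x ! depth y = y"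
proof
  assume "y \<in> set (root_path x)"
  then obtain i where "i < length (root_path x)" "root_path x ! i = y"
    by (auto simp: in_set_conv_nth)
  then show "depth y \<le> depth x \<and> root_path x ! depth y = y"
    using depth_root_path_nth[OF assms, of i] length_root_path[OF assms] by auto
next
  assume "depth y \<le> depth x \<and> root_path x ! depth y = y"
  then show "y \<in> set (root_path x)"
    using nth_mem[of "depth y" "root_path x"] length_root_path[OF assms] by auto
qed

lemma ancestor_root_path:
  assumes "x \<in> V" "y \<in> set (root_path x)"
  shows "root_path y = take (Suc (depth y)) (root_path x)"
proof -
  have "depth y \<le> depth x" "root_path x ! depth y = y"
    using ancestor_iff[OF assms(1)] assms(2) by blast+
  then show ?thesis using root_path_prefix[OF assms(1)] by metis
qed

lemma ancestors_ordered:
  assumes "z \<in> V" "x \<in> set (root_path z)" "y \<in> set (root_path z)" "depth x \<le> depth y"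
  shows "x \<in> set (root_path y)"
proof -
  have "root_path z ! depth x = x" "depth y \<le> depth z"
    using ancestor_iff[OF assms(1)] assms(2,3) by blast+
  then have "take (Suc (depth y)) (root_path z) ! depth x = x" using assms(4) by simp
  moreover have "depth x < length (take (Suc (depth y)) (root_path z))"
    using assms(4) \<open>depth y \<le> depth z\<close> length_root_path[OF assms(1)] by simp
  ultimately show ?thesis using ancestor_root_path[OF assms(1,3)] nth_mem by metis
qed

lemma ancestor_same_step:
  assumes "x \<in> V" "y \<in> set (root_path x)" "y \<noteq> r"
  shows "root_path y ! 1 = root_path x ! 1"
proof -
  have "y \<in> V" using root_path_subset[OF assms(1)] assms(2) by blast
  then have "1 \<le> depth y" using depth_eq_0_iff[of y] assms(3) by linarith
  then show ?thesis using ancestor_root_path[OF assms(1,2)] by simp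
qed

lemma ancestor_depth_eq:
  assumes "x \<in> V" "y \<in> set (root_path x)" "depth y = depth x"
  shows "y = x"
proof -
  have "root_path x ! depth y = y" using ancestor_iff[OF assms(1)] assms(2) by blast
  then show ?thesis using assms(3) root_path_nth_depth[OF assms(1)] by simp
qed

lemma ancestor_antisym:
  assumes "x \<in> V" "y \<in> V" "x \<in> set (root_path y)" "y \<in> set (root_path x)"
  shows "x = y"
proof -
  have "depth x \<le> depth y" "depth y \<le> depth x"
    using ancestor_iff[OF assms(1)] ancestor_iff[OF assms(2)] assms(3,4) by blast+
  then show ?thesis using ancestor_depth_eq[OF assms(2,3)] by simp
qed

lemma tree_le_iff: "tree_le TE r y x \<longleftrightarrow> x \<in> V \<and> y \<in> set (root_path x)"
proof
  assume "tree_le TE r y x"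
  then obtain xs where xs: "is_path TE xs" "hd xs = r" "last xs = x" "y \<in> set xs"
    unfolding tree_le_def by blast
  have "x \<in> V"
    using simple_graph_path_subset[OF simple_tree xs(1)] xs root_in_V
    by (auto simp: is_path_def)
  then show "x \<in> V \<and> y \<in> set (root_path x)" using root_path_eq[OF xs(1,2)] xs(3,4) by simp
next
  assume "x \<in> V \<and> y \<in> set (root_path x)"
  then show "tree_le TE r y x" unfolding tree_le_def using root_path by blast
qed

lemma root_path_snoc:
  assumes "x \<in> V" "{x, y} \<in> TE" "y \<notin> set (root_path x)"
  shows "root_path y = root_path x @ [y]"
proof -
  have "is_path TE (root_path x @ [y])"
    using is_path_snoc[OF root_path(1)[OF assms(1)] assms(3)] root_path(3)[OF assms(1)] assms(2)
    by simp
  moreover have "hd (root_path x @ [y]) = r"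
    using root_path(1,2)[OF assms(1)] by (simp add: is_path_def)
  ultimately show ?thesis using root_path_eq[of "root_path x @ [y]"] by simp
qed

lemma tree_edge_root_paths:
  assumes "x \<in> V" "{x, y} \<in> TE"
  shows "root_path y = root_path x @ [y] \<or> root_path x = root_path y @ [x]"
proof (cases "y \<in> set (root_path x)")
  case True
  have "y \<in> V" "x \<noteq> y" using tree_edge[OF assms(2)] by auto
  then have "x \<notin> set (root_path y)" using ancestor_antisym[OF assms(1)] True by blast
  then show ?thesis using root_path_snoc[of y x] assms \<open>y \<in> V\<close> by (simp add: insert_commute)
next
  case False
  then show ?thesis using root_path_snoc[OF assms] by simp
qed

lemma tree_children_iff: "z \<in> tree_children TE r x \<longleftrightarrow> {x, z} \<in> TE \<and> x \<in> set (root_path z)"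
  unfolding tree_children_def tree_le_iff using tree_edge[of x z] by auto

lemma root_path_child:
  assumes "z \<in> tree_children TE r x"
  shows "x \<in> V" "root_path z = root_path x @ [z]"
proof -
  have z: "{x, z} \<in> TE" "x \<in> set (root_path z)" "z \<in> V"
    using assms tree_edge[of x z] unfolding tree_children_iff by auto
  then show "x \<in> V" using tree_edge[OF z(1)] by blast
  show "root_path z = root_path x @ [z]"
    using tree_edge_root_paths[OF \<open>x \<in> V\<close> z(1)] distinct_root_path[OF \<open>x \<in> V\<close>] z(2) by auto
qed

lemma root_path_Suc_child:
  assumes "x \<in> V" "i < depth x"
  shows "root_path x ! Suc i \<in> tree_children TE r (root_path x ! i)"
proof -
  have "root_path x ! i \<in> set (root_path (root_path x ! Suc i))"
    using root_path_prefix[OF assms(1), of "Suc i"] assms length_root_path[OF assms(1)]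
      nth_mem[of i "take (Suc (Suc i)) (root_path x)"] by simp
  then show ?thesis using root_path_edge[OF assms] unfolding tree_children_iff by blast
qed

lemma leaf_no_descendant:
  assumes "tree_leaf V TE r x" "y \<in> V" "x \<in> set (root_path y)"
  shows "x = y"
proof (rule ccontr)
  assume "x \<noteq> y"
  then have "depth x \<noteq> depth y" using ancestor_depth_eq[OF assms(2,3)] by blast
  moreover have "depth x \<le> depth y" "root_path y ! depth x = x"
    using assms(3) ancestor_iff[OF assms(2)] by auto
  ultimately have "depth x < depth y" by simp
  then have "root_path y ! Suc (depth x) \<in> tree_children TE r x"
    using root_path_Suc_child[OF assms(2) \<open>depth x < depth y\<close>] \<open>root_path y ! depth x = x\<close> by simp
  then show False using assms(1) by (simp add: tree_leaf_def)
qed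

lemma finite_tree_neighbours: "finite {y. {x, y} \<in> TE}"
proof (rule finite_subset[OF _ finite_V])
  show "{y. {x, y} \<in> TE} \<subseteq> V" using tree_edge by blast
qed

lemma tree_degree_gt_2I:
  assumes "{x, a} \<in> TE" "{x, b} \<in> TE" "{x, c} \<in> TE" "a \<noteq> b" "a \<noteq> c" "b \<noteq> c"
  shows "2 < tree_degree TE x"
proof -
  have "card {a, b, c} \<le> card {y. {x, y} \<in> TE}"
    using assms finite_tree_neighbours by (intro card_mono) auto
  then show ?thesis using assms unfolding tree_degree_def by simp
qed

text \<open>Every neighbour of x other than its parent is a child of x.\<close>
lemma tree_children_nonempty:
  assumes "x \<in> V" "1 < tree_degree TE x"
  shows "tree_children TE r x \<noteq> {}"
proof
  assume no_child: "tree_children TE r x = {}"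
  have "{y. {x, y} \<in> TE} \<subseteq> {last (butlast (root_path x))}"
  proof
    fix y assume "y \<in> {y. {x, y} \<in> TE}"
    then have y: "{x, y} \<in> TE" by simp
    have "x \<in> set (root_path x)" by (rule self_in_root_path[OF assms(1)])
    moreover have "x \<notin> set (root_path y)" using no_child y tree_children_iff by blast
    ultimately have "root_path y \<noteq> root_path x @ [y]" by auto
    then have "root_path x = root_path y @ [x]" using tree_edge_root_paths[OF assms(1) y] by simp
    then have "last (butlast (root_path x)) = last (root_path y)" by simp
    also have "\<dots> = y" using root_path(3) tree_edge[OF y] by blast
    finally show "y \<in> {last (butlast (root_path x))}" by simp
  qed
  then have "tree_degree TE x \<le> 1"
    unfolding tree_degree_def using card_mono[of "{last (butlast (root_path x))}"] by simp
  then show False using assms(2) by simp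
qed

text \<open>Where the two paths first differ, their last common vertex has its parent and two distinct
  children as neighbours.\<close>
lemma root_paths_agree:
  assumes "x \<in> V" "y \<in> V" "root_path x ! 1 = root_path y ! 1"
    and "n \<le> depth x" "n \<le> depth y"
    and "\<And>i. 1 \<le> i \<Longrightarrow> i < n \<Longrightarrow> tree_degree TE (root_path y ! i) \<le> 2"
  shows "\<forall>i\<le>n. root_path x ! i = root_path y ! i"
  using assms(4-6)
proof (induction n)
  case 0
  then show ?case using root_path_nth_0 assms(1,2) by simp
next
  case (Suc n)
  note bounds = Suc.prems
  then have agree: "\<forall>i\<le>n. root_path x ! i = root_path y ! i" using Suc.IH by simp
  have "root_path x ! Suc n = root_path y ! Suc n"
  proof (cases n)
    case 0
    then show ?thesis using assms(3) by simp
  next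
    case (Suc n')
    let ?a = "root_path y ! n" and ?p = "root_path y ! n'"
      and ?b = "root_path y ! Suc n" and ?c = "root_path x ! Suc n"
    have "{?a, ?p} \<in> TE" "{?a, ?b} \<in> TE" "{?a, ?c} \<in> TE"
      using root_path_edge[OF assms(2), of n'] root_path_edge[OF assms(2), of n]
        root_path_edge[OF assms(1), of n] agree bounds Suc by (auto simp: insert_commute)
    moreover have "?p \<noteq> ?b" "?p \<noteq> ?c"
      using root_path_nth_eq_iff[OF assms(2), of n' "Suc n"]
        root_path_nth_eq_iff[OF assms(1), of n' "Suc n"] agree bounds Suc by auto
    moreover have "tree_degree TE ?a \<le> 2" using bounds Suc by simp
    ultimately show ?thesis using tree_degree_gt_2I[of ?a ?p ?b ?c] by (metis not_le)
  qed
  then show ?case using agree le_Suc_eq by auto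
qed

lemma no_secant_nested_edges:
  assumes "no_secant_edges E TE r" "d \<in> V"
    and "a \<in> set (root_path d)" "b \<in> set (root_path d)" "c \<in> set (root_path d)"
    and "depth a < depth b" "depth b < depth c" "depth c < depth d"
    and "{a, c} \<in> E" "{b, d} \<in> E"
  shows False
proof -
  let ?xs = "root_path d"
  have "secant TE r {?xs ! depth a, ?xs ! depth c} {?xs ! depth b, ?xs ! depth d}"
    unfolding secant_def using assms(6-8) root_path[OF assms(2)] length_root_path[OF assms(2)]
    by (intro exI[of _ ?xs] exI[of _ "depth a"] exI[of _ "depth c"] exI[of _ "depth b"]
        exI[of _ "depth d"]) auto
  moreover have "?xs ! depth a = a" "?xs ! depth b = b" "?xs ! depth c = c" "?xs ! depth d = d"
    using assms(3-5) ancestor_iff[OF assms(2)] root_path_nth_depth[OF assms(2)] by auto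
  ultimately show False
    using assms(1,9,10) unfolding no_secant_edges_def by auto
qed

end

section \<open>Whips\<close>

locale whip_tree =
  fixes V :: "'a set" and TE :: "'a set set" and r :: 'a
  assumes whip: "whip V TE r"

sublocale whip_tree \<subseteq> rooted_tree
  using whip by unfold_locales (auto simp: whip_def)

context whip_tree
begin

definition node :: 'a where
  "node = (THE v. v \<in> V \<and> 2 < tree_degree TE v)"

lemma node_unique: "\<exists>!v. v \<in> V \<and> 2 < tree_degree TE v"
  using whip by (simp add: whip_def star0_like_def)

lemma node: "node \<in> V" "2 < tree_degree TE node"
  using theI'[OF node_unique] unfolding node_def by auto

lemma tree_degree_le_2:
  assumes "x \<in> V" "x \<noteq> node"
  shows "tree_degree TE x \<le> 2"
proof (rule ccontr)
  assume "\<not> tree_degree TE x \<le> 2"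
  then have "x \<in> V \<and> 2 < tree_degree TE x" using assms(1) by simp
  then show False using node_unique node assms(2) by blast
qed

lemma node_child_leaf:
  assumes "z \<in> tree_children TE r node"
  shows "tree_leaf V TE r z"
proof -
  have "z \<in> V" using assms tree_edge unfolding tree_children_iff by blast
  then show ?thesis using assms whip node unfolding whip_def tree_leaf_def by blast
qed

abbreviation spine :: "'a list" where
  "spine \<equiv> root_path node"

lemma node_in_spine: "node \<in> set spine"
  by (rule self_in_root_path[OF node(1)])

lemma root_in_spine: "r \<in> set spine"
  by (rule root_in_root_path[OF node(1)])

lemma root_path_below_node:
  assumes "x \<in> V" "node \<in> set (root_path x)" "x \<noteq> node"
  shows "root_path x = spine @ [x]"
proof -
  have d: "depth node \<le> depth x" "root_path x ! depth node = node"
    using ancestor_iff[OF assms(1)] assms(2) by blast+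
  moreover have "depth node \<noteq> depth x" using ancestor_depth_eq[OF assms(1,2)] assms(3) by blast
  ultimately have lt: "depth node < depth x" by simp
  let ?z = "root_path x ! Suc (depth node)"
  have "?z \<in> tree_children TE r node" using root_path_Suc_child[OF assms(1) lt] d(2) by simp
  then have "tree_leaf V TE r ?z" "root_path ?z = spine @ [?z]"
    using node_child_leaf root_path_child by blast+
  moreover have "?z \<in> set (root_path x)"
    using lt length_root_path[OF assms(1)] by simp
  ultimately show ?thesis using leaf_no_descendant[OF _ assms(1)] by metis
qed

text \<open>The vertices beyond the root on the side away from the node; if the root is the node
  there are none.\<close>
definition tail :: "'a set" where
  "tail = {x \<in> V. x \<noteq> r \<and> node \<noteq> r \<and> root_path x ! 1 \<noteq> spine ! 1}"

lemma root_path_beyond_spine: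
  assumes "x \<in> V" "x \<notin> tail" "x \<notin> set spine"
  shows "root_path x = spine @ [x]"
proof (cases "node = r")
  case True
  then show ?thesis
    using root_path_below_node assms(1,3) root_in_root_path[OF assms(1)] node_in_spine by auto
next
  case False
  have "x \<noteq> r" using assms(3) root_in_spine by auto
  then have step: "root_path x ! 1 = spine ! 1" using assms(1,2) False by (simp add: tail_def)
  define n where "n = min (depth x) (depth node)"
  have agree: "\<forall>i\<le>n. root_path x ! i = spine ! i"
  proof (rule root_paths_agree[OF assms(1) node(1) step])
    show "n \<le> depth x" "n \<le> depth node" by (simp_all add: n_def)
    fix i assume "1 \<le> i" "i < n"
    then have "spine ! i \<noteq> node"
      using root_path_nth_eq_iff[OF node(1), of i "depth node"] root_path_nth_depth[OF node(1)]
      by (auto simp: n_def)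
    moreover have "spine ! i \<in> V"
      using root_path_subset[OF node(1)] length_root_path[OF node(1)] \<open>i < n\<close> n_def by auto
    ultimately show "tree_degree TE (spine ! i) \<le> 2" using tree_degree_le_2 by blast
  qed
  have "\<not> depth x \<le> depth node"
  proof
    assume "depth x \<le> depth node"
    then have "spine ! depth x = x"
      using agree root_path_nth_depth[OF assms(1)] by (simp add: n_def)
    then show False using ancestor_iff[OF node(1)] \<open>depth x \<le> depth node\<close> assms(3) by blast
  qed
  then have "root_path x ! depth node = node"
    using agree root_path_nth_depth[OF node(1)] by (simp add: n_def)
  then have "node \<in> set (root_path x)"
    using \<open>\<not> depth x \<le> depth node\<close> ancestor_iff[OF assms(1)] by simp
  then show ?thesis using root_path_below_node assms(1,3) node_in_spine by blast
qed

lemma depth_beyond_spine: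
  assumes "x \<in> V" "x \<notin> tail" "x \<notin> set spine"
  shows "depth x = Suc (depth node)"
  using root_path_beyond_spine[OF assms] length_root_path[OF assms(1)] length_root_path[OF node(1)]
  by simp

lemma depth_not_in_tail:
  assumes "x \<in> V" "x \<notin> tail"
  shows "depth x \<le> Suc (depth node)"
proof (cases "x \<in> set spine")
  case True
  then show ?thesis using ancestor_iff[OF node(1)] by simp
next
  case False
  then show ?thesis using depth_beyond_spine[OF assms] by simp
qed

lemma not_in_tail_ancestor:
  assumes "x \<in> V" "x \<notin> tail" "y \<in> V" "y \<notin> tail" "depth x < depth y"
  shows "x \<in> set (root_path y)"
proof -
  have "x \<in> set spine"
  proof (rule ccontr)
    assume "x \<notin> set spine"
    then have "depth x = Suc (depth node)" by (rule depth_beyond_spine[OF assms(1,2)])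
    then show False using depth_not_in_tail[OF assms(3,4)] assms(5) by simp
  qed
  show ?thesis
  proof (cases "y \<in> set spine")
    case True
    then show ?thesis using ancestors_ordered[OF node(1) \<open>x \<in> set spine\<close>] assms(5) by simp
  next
    case False
    then show ?thesis using root_path_beyond_spine[OF assms(3,4)] \<open>x \<in> set spine\<close> by simp
  qed
qed

lemma tailD:
  assumes "x \<in> tail"
  shows "x \<in> V" "node \<noteq> r" "1 \<le> depth x" "root_path x ! 1 \<noteq> spine ! 1"
proof -
  show x: "x \<in> V" "node \<noteq> r" "root_path x ! 1 \<noteq> spine ! 1" using assms by (simp_all add: tail_def)
  have "x \<noteq> r" using assms by (simp add: tail_def)
  then show "1 \<le> depth x" using depth_eq_0_iff[OF x(1)] by linarith
qed

lemma root_path_first_edge: "x \<in> V \<Longrightarrow> 1 \<le> depth x \<Longrightarrow> {r, root_path x ! 1} \<in> TE"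
  using root_path_edge[of x 0] root_path_nth_0[of x] by simp

text \<open>The root is not the node, so besides the first vertex of the spine it has at most one
  neighbour.\<close>
lemma tail_same_step:
  assumes "x \<in> tail" "y \<in> tail"
  shows "root_path x ! 1 = root_path y ! 1"
proof (rule ccontr)
  assume neq: "root_path x ! 1 \<noteq> root_path y ! 1"
  have "1 \<le> depth node" using depth_eq_0_iff[OF node(1)] tailD(2)[OF assms(1)] by linarith
  then have "{r, root_path x ! 1} \<in> TE" "{r, root_path y ! 1} \<in> TE" "{r, spine ! 1} \<in> TE"
    using root_path_first_edge tailD(1,3) assms node(1) by blast+
  then have "2 < tree_degree TE r"
    using tree_degree_gt_2I neq tailD(4)[OF assms(1)] tailD(4)[OF assms(2)] by blast
  then show False using tree_degree_le_2[OF root_in_V] tailD(2)[OF assms(1)] by simp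
qed

lemma node_not_in_tail_path:
  assumes "x \<in> tail"
  shows "node \<notin> set (root_path x)"
proof
  assume "node \<in> set (root_path x)"
  then have "spine ! 1 = root_path x ! 1"
    using ancestor_same_step[OF tailD(1)[OF assms]] tailD(2)[OF assms] by metis
  then show False using tailD(4)[OF assms] by simp
qed

lemma tail_chain:
  assumes "x \<in> tail" "y \<in> tail" "depth x \<le> depth y"
  shows "x \<in> set (root_path y)"
proof -
  note x = tailD[OF assms(1)] and y = tailD[OF assms(2)]
  have "\<forall>i\<le>depth x. root_path x ! i = root_path y ! i"
  proof (rule root_paths_agree[OF x(1) y(1) tail_same_step[OF assms(1,2)] order_refl assms(3)])
    fix i assume "1 \<le> i" "i < depth x"
    then have "root_path y ! i \<in> set (root_path y)"
      using assms(3) length_root_path[OF y(1)] by (intro nth_mem) linarith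
    then have "root_path y ! i \<in> V" "root_path y ! i \<noteq> node"
      using root_path_subset[OF y(1)] node_not_in_tail_path[OF assms(2)] by auto
    then show "tree_degree TE (root_path y ! i) \<le> 2" by (rule tree_degree_le_2)
  qed
  then have "root_path y ! depth x = x" using root_path_nth_depth[OF x(1)] by (metis order_refl)
  then show ?thesis using ancestor_iff[OF y(1)] assms(3) by blast
qed

lemma finite_tail: "finite tail"
  using finite_V by (simp add: tail_def)

definition tail_depth :: nat where
  "tail_depth = Max (depth ` tail)"

lemma depth_le_tail_depth: "x \<in> tail \<Longrightarrow> depth x \<le> tail_depth"
  unfolding tail_depth_def using finite_tail by simp

lemma deepest_in_tail: "x \<in> tail \<Longrightarrow> \<exists>z\<in>tail. depth z = tail_depth"
proof -
  assume "x \<in> tail"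
  then have "tail_depth \<in> depth ` tail"
    unfolding tail_depth_def using finite_tail by (intro Max_in) auto
  then show ?thesis by (metis image_iff)
qed

text \<open>All leaves below the node have depth Suc (depth node); the tail is laid out in reverse
  after them, starting with its deepest vertex at that same position.\<close>
definition whip_pos :: "'a \<Rightarrow> nat" where
  "whip_pos x = (if x \<in> tail then Suc (depth node) + tail_depth - depth x else depth x)"

lemma whip_pos_tail:
  assumes "x \<in> tail"
  shows "Suc (depth node) \<le> whip_pos x" "whip_pos x = Suc (depth node) + tail_depth - depth x"
  using assms depth_le_tail_depth[OF assms] tailD(3)[OF assms] by (auto simp: whip_pos_def)

lemma whip_pos_not_tail:
  "x \<in> V \<Longrightarrow> x \<notin> tail \<Longrightarrow> whip_pos x = depth x \<and> whip_pos x \<le> Suc (depth node)"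
  using depth_not_in_tail by (simp add: whip_pos_def)

lemma whip_pos_root: "whip_pos r = 0"
  using depth_root by (simp add: whip_pos_def tail_def)

lemma whip_pos_le: "x \<in> V \<Longrightarrow> whip_pos x \<le> Suc (depth node) + tail_depth"
  using whip_pos_not_tail[of x] whip_pos_tail(2)[of x] by (cases "x \<in> tail") auto

lemma whip_pos_leaf:
  assumes "tree_leaf V TE r x"
  shows "whip_pos x = Suc (depth node)"
proof (cases "x \<in> tail")
  case True
  then obtain z where z: "z \<in> tail" "depth z = tail_depth" using deepest_in_tail by blast
  then have "x \<in> set (root_path z)" using tail_chain[OF True] depth_le_tail_depth[OF True] by simp
  then have "x = z" using leaf_no_descendant[OF assms] tailD(1)[OF z(1)] by blast
  then show ?thesis using whip_pos_tail(2)[OF True] z(2) by simp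
next
  case False
  have xV: "x \<in> V" using assms by (simp add: tree_leaf_def)
  have "x \<notin> set spine"
  proof
    assume "x \<in> set spine"
    then have "x = node" using leaf_no_descendant[OF assms node(1)] by blast
    then show False
      using assms tree_children_nonempty[OF node(1)] node(2) by (simp add: tree_leaf_def)
  qed
  then have "depth x = Suc (depth node)" by (rule depth_beyond_spine[OF xV False])
  then show ?thesis using whip_pos_not_tail[OF xV False] by simp
qed

end

section \<open>Graphs with a normal whip\<close>

locale whip_graph = whip_tree +
  fixes E :: "'a set set"
  assumes simple: "simple_graph V E"
    and normal: "normal_tree E TE r"
    and no_secant: "no_secant_edges E TE r"
begin

lemma edge_comparable:
  assumes "{x, y} \<in> E"
  shows "x \<in> V" "y \<in> V" "x \<noteq> y" "x \<in> set (root_path y) \<or> y \<in> set (root_path x)"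
  using simple_graph_edge[OF simple assms] normal assms
  unfolding normal_tree_def tree_le_iff by auto

lemma edge_depth_neq:
  assumes "{x, y} \<in> E"
  shows "depth x \<noteq> depth y"
  using edge_comparable[OF assms] ancestor_depth_eq by metis

lemma tail_edge:
  assumes "{x, y} \<in> E" "y \<in> tail"
  shows "x = r \<or> x \<in> tail"
proof (cases "x = r")
  case False
  note e = edge_comparable[OF assms(1)] and y = tailD[OF assms(2)]
  have "root_path x ! 1 = root_path y ! 1"
  proof (cases "x \<in> set (root_path y)")
    case True
    show ?thesis by (rule ancestor_same_step[OF e(2) True False])
  next
    case False
    then have "y \<in> set (root_path x)" using e(4) by blast
    moreover have "y \<noteq> r" using y(3) depth_root by auto
    ultimately show ?thesis using ancestor_same_step[OF e(1)] by metis
  qed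
  then show ?thesis using y e(1) False by (simp add: tail_def)
qed simp

lemma whip_pos_edge_neq:
  assumes "{x, y} \<in> E"
  shows "whip_pos x \<noteq> whip_pos y"
proof -
  have e: "{y, x} \<in> E" using assms by (simp add: insert_commute)
  note x = edge_comparable(1)[OF assms] and y = edge_comparable(2)[OF assms]
  consider "x \<notin> tail" "y \<notin> tail" | "x \<in> tail" "y \<in> tail" | "x = r" "y \<in> tail" | "y = r" "x \<in> tail"
    using tail_edge[OF assms] tail_edge[OF e] by blast
  then show ?thesis
  proof cases
    case 1
    then show ?thesis
      using whip_pos_not_tail[OF x 1(1)] whip_pos_not_tail[OF y 1(2)] edge_depth_neq[OF assms]
      by simp
  next
    case 2
    then show ?thesis
      using whip_pos_tail(2)[OF 2(1)] whip_pos_tail(2)[OF 2(2)] depth_le_tail_depth[OF 2(1)]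
        depth_le_tail_depth[OF 2(2)] edge_depth_neq[OF assms] by arith
  next
    case 3
    then show ?thesis using whip_pos_tail(1)[OF 3(2)] whip_pos_root by simp
  next
    case 4
    then show ?thesis using whip_pos_tail(1)[OF 4(2)] whip_pos_root by simp
  qed
qed

lemma whip_pos_tail_less:
  "x \<in> tail \<Longrightarrow> y \<in> tail \<Longrightarrow> whip_pos x < whip_pos y \<longleftrightarrow> depth y < depth x"
  using whip_pos_tail(2)[of x] whip_pos_tail(2)[of y]
    depth_le_tail_depth[of x] depth_le_tail_depth[of y] by arith

lemma spine_side_noncrossing:
  assumes e1: "{x1, y1} \<in> E" and e2: "{x2, y2} \<in> E"
    and off_tail: "x1 \<notin> tail" "y1 \<notin> tail" "x2 \<notin> tail" "y2 \<notin> tail"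
    and order: "whip_pos x1 < whip_pos x2" "whip_pos x2 < whip_pos y1" "whip_pos y1 < whip_pos y2"
  shows False
proof -
  have V: "x1 \<in> V" "y1 \<in> V" "x2 \<in> V" "y2 \<in> V" using edge_comparable e1 e2 by blast+
  then have d: "depth x1 < depth x2" "depth x2 < depth y1" "depth y1 < depth y2"
    using order whip_pos_not_tail off_tail by auto
  then have "x1 \<in> set (root_path y2)" "x2 \<in> set (root_path y2)" "y1 \<in> set (root_path y2)"
    using not_in_tail_ancestor V off_tail by (meson less_trans)+
  then show False using no_secant_nested_edges[OF no_secant V(4)] d e1 e2 by blast
qed

text \<open>On the tail the layout reverses depths, so the crossing pattern reappears on the root path
  of the deepest of the four vertices.\<close>
lemma tail_side_noncrossing:
  assumes e1: "{x1, y1} \<in> E" and e2: "{x2, y2} \<in> E"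
    and on_tail: "x1 = r \<or> x1 \<in> tail" "y1 \<in> tail" "x2 \<in> tail" "y2 \<in> tail"
    and order: "whip_pos x1 < whip_pos x2" "whip_pos x2 < whip_pos y1" "whip_pos y1 < whip_pos y2"
  shows False
proof -
  have e1': "{y1, x1} \<in> E" and e2': "{y2, x2} \<in> E" using e1 e2 by (simp_all add: insert_commute)
  have d: "depth y2 < depth y1" "depth y1 < depth x2"
    using order whip_pos_tail_less on_tail by auto
  have anc: "y2 \<in> set (root_path x2)" "y1 \<in> set (root_path x2)"
    using tail_chain on_tail d by (meson less_imp_le less_trans)+
  show False
  proof (cases "x1 = r")
    case True
    have "x2 \<in> V" using on_tail(3) by (rule tailD)
    then show False
      using no_secant_nested_edges[OF no_secant _ root_in_root_path anc] d depth_root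
        tailD(3)[OF on_tail(4)] True e1 e2' by simp
  next
    case False
    then have "x1 \<in> tail" using on_tail by simp
    then have "depth x2 < depth x1" "x2 \<in> set (root_path x1)"
      using order(1) whip_pos_tail_less on_tail tail_chain by (auto intro: less_imp_le)
    moreover have "y2 \<in> set (root_path x1)" "y1 \<in> set (root_path x1)"
      using tail_chain \<open>x1 \<in> tail\<close> on_tail d calculation by (meson less_imp_le less_trans)+
    ultimately show False
      using no_secant_nested_edges[OF no_secant tailD(1)[OF \<open>x1 \<in> tail\<close>]] d e1' e2' by blast
  qed
qed

lemma whip_pos_noncrossing:
  assumes e1: "{x1, y1} \<in> E" and e2: "{x2, y2} \<in> E"
    and order: "whip_pos x1 < whip_pos x2" "whip_pos x2 < whip_pos y1" "whip_pos y1 < whip_pos y2"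
  shows False
proof -
  have e1': "{y1, x1} \<in> E" and e2': "{y2, x2} \<in> E" using e1 e2 by (simp_all add: insert_commute)
  have not_root: "x2 \<noteq> r" "y1 \<noteq> r" "y2 \<noteq> r" using order whip_pos_root by auto
  have tail1: "y1 \<in> tail \<and> (x1 = r \<or> x1 \<in> tail)" if "x1 \<in> tail \<or> y1 \<in> tail"
    using that tail_edge[OF e1] tail_edge[OF e1'] not_root by blast
  have tail2: "x2 \<in> tail \<and> y2 \<in> tail" if "x2 \<in> tail \<or> y2 \<in> tail"
    using that tail_edge[OF e2] tail_edge[OF e2'] not_root by blast
  consider (spine_side) "x1 \<notin> tail" "y1 \<notin> tail" "x2 \<notin> tail" "y2 \<notin> tail"
    | (tail_side) "x1 = r \<or> x1 \<in> tail" "y1 \<in> tail" "x2 \<in> tail" "y2 \<in> tail"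
    | (first_in_tail) "y1 \<in> tail" "y2 \<notin> tail"
    | (second_in_tail) "x2 \<in> tail" "y1 \<notin> tail"
    using tail1 tail2 by blast
  then show False
  proof cases
    case spine_side
    then show False using spine_side_noncrossing[OF e1 e2] order by blast
  next
    case tail_side
    then show False using tail_side_noncrossing[OF e1 e2] order by blast
  next
    case first_in_tail
    then show False
      using whip_pos_tail(1) whip_pos_not_tail edge_comparable(2)[OF e2] order(3) by fastforce
  next
    case second_in_tail
    then show False
      using whip_pos_tail(1) whip_pos_not_tail edge_comparable(1)[OF e1'] order(2) by fastforce
  qed
qed

end

theorem proposition4:
  fixes V :: "'a set" and E TE :: "'a set set" and r :: 'a
  assumes "simple_graph V E"
    and "spanning_tree V E TE"
    and "r \<in> V"
    and "normal_tree E TE r"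
    and "no_secant_edges E TE r"
    and "whip V TE r"
  shows "\<exists>c. proper_3_coloring V E c \<and>
           (\<forall>x y. tree_leaf V TE r x \<and> tree_leaf V TE r y \<longrightarrow> c x = c y)"
proof -
  interpret whip_graph V TE r E
    using assms(1,4-6) by unfold_locales
  obtain col :: "nat \<Rightarrow> nat" where "proper_3_coloring V E (col \<circ> whip_pos)"
  proof (rule noncrossing_layout_3_colouring[of E whip_pos "Suc (depth node) + tail_depth"])
    show "whip_pos x \<noteq> whip_pos y" if "{x, y} \<in> E" for x y
      using that by (rule whip_pos_edge_neq)
    show False if "{x1, y1} \<in> E" "{x2, y2} \<in> E" "whip_pos x1 < whip_pos x2"
      "whip_pos x2 < whip_pos y1" "whip_pos y1 < whip_pos y2" for x1 y1 x2 y2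
      using that by (rule whip_pos_noncrossing)
    show "whip_pos x \<le> Suc (depth node) + tail_depth" if "{x, y} \<in> E" for x y
      using whip_pos_le edge_comparable(1) that by blast
  qed (blast intro: that)
  moreover have "(col \<circ> whip_pos) x = (col \<circ> whip_pos) y"
    if "tree_leaf V TE r x" "tree_leaf V TE r y" for x y
    using whip_pos_leaf that by simp
  ultimately show ?thesis by blast
qed

end
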